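(* Let $r,p\ge0$ with $r+2p=n$, and $\mathbf t=(t_1,\dots,t_p)\in\mathbb C^p$ with all $t_i\ne0$. On the $W^n$-module $S(\mathbf t,0)$ all $u_k(1)$ act by zero, and $u_k(0)$ acts by $0$ if $k$ is odd or $k>2p$, and by the scalar $\sigma_{k/2}(t_1,\dots,t_p)$ if $k$ is even, where $\sigma_a$ is the $a$-th elementary symmetric polynomial.
   Context: For $m\ge0$, $U(\mathfrak h_m)$ is the superalgebra generated by odd $\xi_1,\dots,\xi_m$ with $\xi_i\xi_j+\xi_j\xi_i=0$ ($i\ne j$), $x_i=\xi_i^2$; it is the enveloping algebra of the Cartan subalgebra of $Q(m)$. $W^m\subset U(\mathfrak h_m)$ is the principal finite $W$-algebra of $Q(m)$ realized via the injective Harish-Chandra homomorphism, generated by $u_k(0),u_k(1)$ ($1\le k\le m$), the even and odd parts of $\sum_{1\le i_1<\dots<i_k\le m}\prod_{j=1}^{k}(x_{i_j}+(-1)^{k-j}\xi_{i_j})$ (ordered product). $W^2$ is generated by $\phi_0=\xi_1+\xi_2$, $\phi_1=x_2\xi_1-x_1\xi_2$, $z_0=x_1+x_2$, $z_1'=x_1x_2-\xi_1\xi_2$; $\Gamma_t$ is the $(1|0)$-dimensional $W^2$-module with $\phi_0,\phi_1,z_0$ acting by $0$ and $z_1'$ by $t$. The trivial $W^r$-module $\mathbb C$ is the restriction of the even one-dimensional $U(\mathfrak h_r)$-module on which all $\xi_i$ act by $0$. Via $U(\mathfrak h_n)\cong U(\mathfrak h_r)\otimes U(\mathfrak h_2)^{\otimes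 p}$ (super tensor product, consecutive blocks of $\xi$'s to successive factors) one has $W^n\subset W^r\otimes(W^2)^{\otimes p}$, and $S(\mathbf t,0)$ is the restriction to $W^n$ of the one-dimensional module $\mathbb C\otimes\Gamma_{t_1}\otimes\dots\otimes\Gamma_{t_p}$. *)

theory Defs
  imports Complex_Main "HOL-Library.Poly_Mapping"
begin

text \<open>
Model of U(h_m): all U(h_m) live inside one ambient superalgebra U(h_infinity) with odd
generators xi_1, xi_2, ... subject to xi_i xi_j + xi_j xi_i = 0 (i ~= j).
A PBW basis is given by ordered monomials xi_1^(a_1) xi_2^(a_2) ...,
indexed by exponent vectors a :: nat =>_0 nat (index i = generator xi_i, 1-based).
An element is its coefficient function (only finitely supported ones are used).
\<close>

type_synonym uh = "(nat \<Rightarrow>\<^sub>0 nat) \<Rightarrow> complex"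

text \<open>Sign for the product of ordered monomials: xi^a xi^b = (-1)^(msign a b) xi^(a+b).\<close>
definition msign :: "(nat \<Rightarrow>\<^sub>0 nat) \<Rightarrow> (nat \<Rightarrow>\<^sub>0 nat) \<Rightarrow> nat" where
  "msign a b = (\<Sum>i\<in>Poly_Mapping.keys a. \<Sum>j\<in>Poly_Mapping.keys b. if j < i then Poly_Mapping.lookup a i * Poly_Mapping.lookup b j else 0)"

definition uone :: uh where
  "uone = (\<lambda>c. if c = 0 then 1 else 0)"

definition uadd :: "uh \<Rightarrow> uh \<Rightarrow> uh" where
  "uadd f g = (\<lambda>c. f c + g c)"

definition usmul :: "complex \<Rightarrow> uh \<Rightarrow> uh" where
  "usmul z f = (\<lambda>c. z * f c)"

definition umul :: "uh \<Rightarrow> uh \<Rightarrow> uh" where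
  "umul f g = (\<lambda>c. \<Sum>(a, b) \<in> {(a, b). a + b = c}. (-1) ^ msign a b * f a * g b)"

definition usum :: "('i \<Rightarrow> uh) \<Rightarrow> 'i set \<Rightarrow> uh" where
  "usum F S = (\<lambda>c. \<Sum>s\<in>S. F s c)"

definition uprodl :: "uh list \<Rightarrow> uh" where
  "uprodl xs = foldr umul xs uone"

definition xi :: "nat \<Rightarrow> uh" where
  "xi i = (\<lambda>c. if c = Poly_Mapping.single i 1 then 1 else 0)"

definition xx :: "nat \<Rightarrow> uh" where
  "xx i = umul (xi i) (xi i)"

text \<open>Counit: the action on the trivial even 1-dimensional module (all xi act by 0).\<close>
definition counit :: "uh \<Rightarrow> complex" where
  "counit f = f 0"

definition mdeg :: "(nat \<Rightarrow>\<^sub>0 nat) \<Rightarrow> nat" where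
  "mdeg a = (\<Sum>i\<in>Poly_Mapping.keys a. Poly_Mapping.lookup a i)"

definition upart :: "nat \<Rightarrow> uh \<Rightarrow> uh" where
  "upart e f = (\<lambda>c. if mdeg c mod 2 = e mod 2 then f c else 0)"

definition ugen :: "nat \<Rightarrow> nat \<Rightarrow> uh" where
  "ugen m k = usum (\<lambda>I. uprodl (map (\<lambda>(j, i). uadd (xx i) (usmul ((-1) ^ (k - j)) (xi i)))
                                   (enumerate 1 (sorted_list_of_set I))))
                   {I. I \<subseteq> {1..m} \<and> card I = k}"

text \<open>u_k(e), generators of the principal finite W-algebra W^m of Q(m)\<close>
definition u :: "nat \<Rightarrow> nat \<Rightarrow> nat \<Rightarrow> uh" where
  "u m k e = upart e (ugen m k)"

definition Wgens :: "nat \<Rightarrow> uh set" where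
  "Wgens m = {u m k e | k e. 1 \<le> k \<and> k \<le> m \<and> e \<in> {0, 1}}"

inductive_set subalg :: "uh set \<Rightarrow> uh set" for G where
  one: "uone \<in> subalg G"
| gen: "g \<in> G \<Longrightarrow> g \<in> subalg G"
| add: "a \<in> subalg G \<Longrightarrow> b \<in> subalg G \<Longrightarrow> uadd a b \<in> subalg G"
| smul: "a \<in> subalg G \<Longrightarrow> usmul z a \<in> subalg G"
| mul: "a \<in> subalg G \<Longrightarrow> b \<in> subalg G \<Longrightarrow> umul a b \<in> subalg G"

abbreviation W :: "nat \<Rightarrow> uh set" where
  "W m \<equiv> subalg (Wgens m)"

text \<open>Generators of W^2 placed in the i-th U(h_2) block (i = 1..p) of U(h_n) = U(h_r) (x) U(h_2)^p,
  i.e. on xi_(r+2i-1), xi_(r+2i).\<close>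
definition blk_a :: "nat \<Rightarrow> nat \<Rightarrow> nat" where "blk_a r i = r + 2 * i - 1"
definition blk_b :: "nat \<Rightarrow> nat \<Rightarrow> nat" where "blk_b r i = r + 2 * i"

definition phi0 :: "nat \<Rightarrow> nat \<Rightarrow> uh" where
  "phi0 r i = uadd (xi (blk_a r i)) (xi (blk_b r i))"
definition phi1 :: "nat \<Rightarrow> nat \<Rightarrow> uh" where
  "phi1 r i = uadd (umul (xx (blk_b r i)) (xi (blk_a r i)))
                   (usmul (-1) (umul (xx (blk_a r i)) (xi (blk_b r i))))"
definition z0 :: "nat \<Rightarrow> nat \<Rightarrow> uh" where
  "z0 r i = uadd (xx (blk_a r i)) (xx (blk_b r i))"
definition z1' :: "nat \<Rightarrow> nat \<Rightarrow> uh" where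
  "z1' r i = uadd (umul (xx (blk_a r i)) (xx (blk_b r i)))
                  (usmul (-1) (umul (xi (blk_a r i)) (xi (blk_b r i))))"

definition Wtens :: "nat \<Rightarrow> nat \<Rightarrow> uh set" where
  "Wtens r p = subalg (Wgens r \<union> (\<Union>i\<in>{1..p}. {phi0 r i, phi1 r i, z0 r i, z1' r i}))"

text \<open>chi is the character (action on the one-dimensional even module)
  C (x) Gamma_(t_1) (x) ... (x) Gamma_(t_p) of W^r (x) (W^2)^(x p).\<close>
definition is_S_char :: "nat \<Rightarrow> nat \<Rightarrow> (nat \<Rightarrow> complex) \<Rightarrow> (uh \<Rightarrow> complex) \<Rightarrow> bool" where
  "is_S_char r p t \<chi> \<longleftrightarrow>
     \<chi> uone = 1 \<and>
     (\<forall>a\<in>Wtens r p. \<forall>b\<in>Wtens r p. \<chi> (uadd a b) = \<chi> a + \<chi> b \<and> \<chi> (umul a b) = \<chi> a * \<chi> b) \<and>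
     (\<forall>a\<in>Wtens r p. \<forall>z. \<chi> (usmul z a) = z * \<chi> a) \<and>
     (\<forall>a\<in>W r. \<chi> a = counit a) \<and>
     (\<forall>i\<in>{1..p}. \<chi> (phi0 r i) = 0 \<and> \<chi> (phi1 r i) = 0 \<and> \<chi> (z0 r i) = 0 \<and> \<chi> (z1' r i) = t i)"

definition esym :: "nat \<Rightarrow> nat \<Rightarrow> (nat \<Rightarrow> complex) \<Rightarrow> complex" where
  "esym a p t = (\<Sum>S | S \<subseteq> {1..p} \<and> card S = a. \<Prod>i\<in>S. t i)"

end

theory Submission
  imports Defs "HOL-Library.FuncSet"
begin

text \<open>
  Let \<open>U(m, k) = u\<^sub>k(0) + u\<^sub>k(1)\<close> in \<open>U(h\<^sub>m)\<close> and let \<open>\<tau>\<close> be the parity automorphism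
  \<open>\<xi>\<^sub>i \<mapsto> -\<xi>\<^sub>i\<close>. Splitting off the largest index gives
  \<open>U(m + 1, k) = U(m, k) + \<tau>(U(m, k - 1)) (x\<^sub>m\<^sub>+\<^sub>1 + \<xi>\<^sub>m\<^sub>+\<^sub>1)\<close>. Applied twice to a block \<open>{a, b}\<close>
  of \<open>U(h\<^sub>2)\<close>, the new factors combine into generators of \<open>W\<^sup>2\<close>:
  \<open>(x\<^sub>a + \<xi>\<^sub>a) + (x\<^sub>b + \<xi>\<^sub>b) = z\<^sub>0 + \<phi>\<^sub>0\<close> and \<open>(x\<^sub>a - \<xi>\<^sub>a) (x\<^sub>b + \<xi>\<^sub>b) = z\<^sub>1' - \<phi>\<^sub>1\<close>.
  Since \<open>U(r, k)\<close> lies in \<open>W\<^sup>r\<close>, where \<open>\<chi>\<close> is the counit and so vanishes for \<open>k \<ge> 1\<close>, induction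
  over the blocks puts \<open>U(n, k)\<close> into \<open>W\<^sup>r \<otimes> (W\<^sup>2)\<^sup>\<otimes>\<^sup>p\<close>; as \<open>\<chi>\<close> is \<open>\<tau>\<close>-invariant, the values
  \<open>e(i, k) = \<chi>(U(r + 2i, k))\<close> obey \<open>e(i, k) = e(i - 1, k) + t\<^sub>i e(i - 1, k - 2)\<close>, the recursion of the
  elementary symmetric polynomials of degree \<open>k / 2\<close>. Finally \<open>u\<^sub>k(e) = (U + (-1)\<^sup>e \<tau>(U)) / 2\<close>.
\<close>

section \<open>Multiplication in \<open>U(h\<^sub>\<infinity>)\<close>\<close>

lemma finite_lookup_le: "finite {a :: nat \<Rightarrow>\<^sub>0 nat. \<forall>i. Poly_Mapping.lookup a i \<le> Poly_Mapping.lookup c i}"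
  (is "finite ?D")
proof -
  let ?restr = "\<lambda>a. restrict (Poly_Mapping.lookup a) (Poly_Mapping.keys c)"
  have "inj_on ?restr ?D"
  proof (rule inj_onI)
    fix a b assume "a \<in> ?D" "b \<in> ?D" and eq: "?restr a = ?restr b"
    show "a = b"
    proof (rule poly_mapping_eqI)
      fix i
      show "Poly_Mapping.lookup a i = Poly_Mapping.lookup b i"
        using fun_cong[OF eq, of i] \<open>a \<in> ?D\<close> \<open>b \<in> ?D\<close>
        by (cases "i \<in> Poly_Mapping.keys c") (auto simp: in_keys_iff dest!: spec[of _ i])
    qed
  qed
  moreover have "?restr ` ?D \<subseteq> PiE (Poly_Mapping.keys c) (\<lambda>i. {..Poly_Mapping.lookup c i})"
    by auto
  then have "finite (?restr ` ?D)"
    by (rule finite_subset) (auto intro: finite_PiE)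
  ultimately show ?thesis
    by (rule finite_imageD[rotated])
qed

lemma finite_add_decompositions: "finite {(a, b). (a :: nat \<Rightarrow>\<^sub>0 nat) + b = c}"
proof (rule finite_subset)
  let ?D = "{a :: nat \<Rightarrow>\<^sub>0 nat. \<forall>i. Poly_Mapping.lookup a i \<le> Poly_Mapping.lookup c i}"
  show "{(a, b). a + b = c} \<subseteq> ?D \<times> ?D"
    by (auto simp: lookup_add)
  show "finite (?D \<times> ?D)"
    using finite_lookup_le by blast
qed

lemma msign_eq_sum:
  assumes "finite K" "Poly_Mapping.keys a \<subseteq> K" "finite L" "Poly_Mapping.keys b \<subseteq> L"
  shows "msign a b = (\<Sum>i\<in>K. \<Sum>j\<in>L. if j < i then Poly_Mapping.lookup a i * Poly_Mapping.lookup b j else 0)"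
  unfolding msign_def using assms
  by (intro sum.mono_neutral_cong_left sum.mono_neutral_left) (auto simp: in_keys_iff)

lemma msign_add_left: "msign (a + b) d = msign a d + msign b d"
proof -
  let ?K = "Poly_Mapping.keys a \<union> Poly_Mapping.keys b" and ?L = "Poly_Mapping.keys d"
  have "msign (a + b) d = (\<Sum>i\<in>?K. \<Sum>j\<in>?L. if j < i then Poly_Mapping.lookup (a + b) i * Poly_Mapping.lookup d j else 0)"
    by (rule msign_eq_sum) (auto simp: keys_add)
  also have "\<dots> = msign a d + msign b d"
    by (subst (1 2) msign_eq_sum[where K = ?K and L = ?L])
      (auto simp: lookup_add algebra_simps simp flip: sum.distrib intro!: sum.cong)
  finally show ?thesis .
qed

lemma msign_add_right: "msign a (b + d) = msign a b + msign a d"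
proof -
  let ?K = "Poly_Mapping.keys a" and ?L = "Poly_Mapping.keys b \<union> Poly_Mapping.keys d"
  have "msign a (b + d) = (\<Sum>i\<in>?K. \<Sum>j\<in>?L. if j < i then Poly_Mapping.lookup a i * Poly_Mapping.lookup (b + d) j else 0)"
    by (rule msign_eq_sum) (auto simp: keys_add)
  also have "\<dots> = msign a b + msign a d"
    by (subst (1 2) msign_eq_sum[where K = ?K and L = ?L])
      (auto simp: lookup_add algebra_simps simp flip: sum.distrib intro!: sum.cong)
  finally show ?thesis .
qed

lemma msign_zero_left [simp]: "msign 0 b = 0"
  and msign_zero_right [simp]: "msign a 0 = 0"
  by (simp_all add: msign_def)

lemma msign_single: "msign (Poly_Mapping.single i m) (Poly_Mapping.single j k) = (if j < i then m * k else 0)"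
  by (simp add: msign_def)

lemma umul_assoc: "umul (umul f g) h = umul f (umul g h)"
proof (rule ext)
  fix c :: "nat \<Rightarrow>\<^sub>0 nat"
  define P where "P = (\<lambda>c :: nat \<Rightarrow>\<^sub>0 nat. {(a, b). a + b = c})"
  have fin: "\<And>c. finite (P c)"
    unfolding P_def by (rule finite_add_decompositions)
  define T1 where "T1 = (\<lambda>((e, d), (a, b)). (-1 :: complex) ^ msign e d * (-1) ^ msign a b * f a * g b * h d)"
  define T2 where "T2 = (\<lambda>((a, e), (b, d)). (-1 :: complex) ^ msign a e * (-1) ^ msign b d * f a * g b * h d)"
  have "umul (umul f g) h c = (\<Sum>x\<in>P c. \<Sum>y\<in>P (fst x). T1 (x, y))"
    unfolding umul_def P_def T1_def
    by (auto simp: sum_distrib_left sum_distrib_right mult_ac case_prod_beta intro!: sum.cong)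
  also have "\<dots> = sum T1 (Sigma (P c) (\<lambda>x. P (fst x)))"
    using fin by (subst sum.Sigma) auto
  also have "\<dots> = sum T2 (Sigma (P c) (\<lambda>x. P (snd x)))"
  proof (rule sum.reindex_bij_witness[where j = "\<lambda>((e, d), (a, b)). ((a, b + d), (b, d))"
        and i = "\<lambda>((a, e), (b, d)). ((a + b, d), (a, b))"])
    fix z assume "z \<in> Sigma (P c) (\<lambda>x. P (fst x))"
    then obtain e d a b where z: "z = ((e, d), (a, b))" "e + d = c" "a + b = e"
      unfolding P_def by auto
    then show "(\<lambda>((a, e), (b, d)). ((a + b, d), (a, b))) ((\<lambda>((e, d), (a, b)). ((a, b + d), (b, d))) z) = z"
      and "(\<lambda>((e, d), (a, b)). ((a, b + d), (b, d))) z \<in> Sigma (P c) (\<lambda>x. P (snd x))"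
      unfolding P_def by (auto simp: add.assoc)
    show "T2 ((\<lambda>((e, d), (a, b)). ((a, b + d), (b, d))) z) = T1 z"
      unfolding T1_def T2_def z(1) z(3)[symmetric]
      by (simp add: msign_add_left msign_add_right power_add algebra_simps)
  next
    fix z assume "z \<in> Sigma (P c) (\<lambda>x. P (snd x))"
    then obtain e d a b where "z = ((a, e), (b, d))" "a + e = c" "b + d = e"
      unfolding P_def by auto
    then show "(\<lambda>((e, d), (a, b)). ((a, b + d), (b, d))) ((\<lambda>((a, e), (b, d)). ((a + b, d), (a, b))) z) = z"
      and "(\<lambda>((a, e), (b, d)). ((a + b, d), (a, b))) z \<in> Sigma (P c) (\<lambda>x. P (fst x))"
      unfolding P_def by (auto simp: add.assoc)
  qed
  also have "\<dots> = (\<Sum>x\<in>P c. \<Sum>y\<in>P (snd x). T2 (x, y))"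
    using fin by (subst sum.Sigma) auto
  also have "\<dots> = umul f (umul g h) c"
    unfolding umul_def P_def T2_def
    by (auto simp: sum_distrib_left sum_distrib_right mult_ac case_prod_beta intro!: sum.cong)
  finally show "umul (umul f g) h c = umul f (umul g h) c" .
qed

lemma umul_uone_left [simp]: "umul uone f = f"
proof (rule ext)
  fix c :: "nat \<Rightarrow>\<^sub>0 nat"
  have "umul uone f c = (\<Sum>x\<in>{(a, b). a + b = c}. if x = (0, c) then f c else 0)"
    unfolding umul_def uone_def by (rule sum.cong) (auto split: if_splits)
  then show "umul uone f c = f c"
    using finite_add_decompositions[of c] by simp
qed

lemma umul_uone_right [simp]: "umul f uone = f"
proof (rule ext)
  fix c :: "nat \<Rightarrow>\<^sub>0 nat"
  have "umul f uone c = (\<Sum>x\<in>{(a, b). a + b = c}. if x = (c, 0) then f c else 0)"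
    unfolding umul_def uone_def by (rule sum.cong) (auto split: if_splits)
  then show "umul f uone c = f c"
    using finite_add_decompositions[of c] by simp
qed

lemma umul_uadd_left: "umul (uadd f g) h = uadd (umul f h) (umul g h)"
  and umul_uadd_right: "umul f (uadd g h) = uadd (umul f g) (umul f h)"
  unfolding umul_def uadd_def by (auto simp: algebra_simps sum.distrib case_prod_beta)

lemma umul_usmul_left: "umul (usmul z f) g = usmul z (umul f g)"
  and umul_usmul_right: "umul f (usmul z g) = usmul z (umul f g)"
  unfolding umul_def usmul_def by (auto simp: algebra_simps sum_distrib_left case_prod_beta)

lemma umul_usum_left: "finite S \<Longrightarrow> umul (usum F S) g = usum (\<lambda>s. umul (F s) g) S"
  unfolding umul_def usum_def
  by (auto simp: sum_distrib_right sum_distrib_left case_prod_beta intro!: ext sum.swap)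

lemma usmul_one [simp]: "usmul 1 f = f"
  by (simp add: usmul_def)

lemma usmul_usmul [simp]: "usmul a (usmul b f) = usmul (a * b) f"
  by (simp add: usmul_def mult.assoc)

lemma uadd_assoc: "uadd (uadd f g) h = uadd f (uadd g h)"
  by (simp add: uadd_def add.assoc)

lemma usum_cong: "(\<And>s. s \<in> S \<Longrightarrow> F s = G s) \<Longrightarrow> usum F S = usum G S"
  unfolding usum_def by (auto intro!: ext sum.cong)

lemma usum_union_disjoint:
  "finite A \<Longrightarrow> finite B \<Longrightarrow> A \<inter> B = {} \<Longrightarrow> usum F (A \<union> B) = uadd (usum F A) (usum F B)"
  unfolding usum_def uadd_def by (auto intro!: ext sum.union_disjoint)

lemma usum_reindex: "inj_on h A \<Longrightarrow> usum F (h ` A) = usum (F \<circ> h) A"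
  unfolding usum_def by (auto intro!: ext simp: sum.reindex)

definition mon :: "(nat \<Rightarrow>\<^sub>0 nat) \<Rightarrow> uh" where
  "mon a = (\<lambda>c. if c = a then 1 else 0)"

lemma umul_mon: "umul (mon a) (mon b) = usmul ((-1) ^ msign a b) (mon (a + b))"
proof (rule ext)
  fix c :: "nat \<Rightarrow>\<^sub>0 nat"
  have "umul (mon a) (mon b) c = (\<Sum>x\<in>{(a', b'). a' + b' = c}. if x = (a, b) then (-1) ^ msign a b else 0)"
    unfolding umul_def mon_def by (rule sum.cong) (auto split: if_splits)
  then show "umul (mon a) (mon b) c = usmul ((-1) ^ msign a b) (mon (a + b)) c"
    using finite_add_decompositions[of c] by (auto simp: usmul_def mon_def)
qed

lemma xi_eq_mon: "xi i = mon (Poly_Mapping.single i 1)"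
  by (simp add: xi_def mon_def)

lemma xx_eq_mon: "xx i = mon (Poly_Mapping.single i 2)"
proof -
  have "Poly_Mapping.single i (1 :: nat) + Poly_Mapping.single i 1 = Poly_Mapping.single i 2"
    by (simp only: single_add[symmetric] one_add_one)
  then show ?thesis
    by (simp add: xx_def xi_eq_mon umul_mon msign_single del: One_nat_def)
qed

lemma poly_mapping_add_eq_0_iff: "(a :: nat \<Rightarrow>\<^sub>0 nat) + b = 0 \<longleftrightarrow> a = 0 \<and> b = 0"
  by (metis add_cancel_right_left poly_mapping_eqI add_is_0 lookup_add lookup_zero)

lemma single_eq_0_iff [simp]: "Poly_Mapping.single i (k :: nat) = 0 \<longleftrightarrow> k = 0"
  by (metis lookup_single_eq lookup_zero single_zero)

lemma counit_umul: "counit (umul f g) = counit f * counit g"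
proof -
  have "{(a, b). (a :: nat \<Rightarrow>\<^sub>0 nat) + b = 0} = {(0, 0)}"
    by (auto simp: poly_mapping_add_eq_0_iff)
  then show ?thesis
    by (simp add: counit_def umul_def)
qed

lemma mdeg_add: "mdeg (a + b) = mdeg a + mdeg b"
proof -
  let ?K = "Poly_Mapping.keys a \<union> Poly_Mapping.keys b"
  have "mdeg c = (\<Sum>i\<in>?K. Poly_Mapping.lookup c i)" if "Poly_Mapping.keys c \<subseteq> ?K" for c
    unfolding mdeg_def using that by (intro sum.mono_neutral_left) (auto simp: in_keys_iff)
  then show ?thesis
    by (simp add: keys_add lookup_add sum.distrib)
qed

section \<open>The parity automorphism \<open>\<xi>\<^sub>i \<mapsto> -\<xi>\<^sub>i\<close>\<close>

definition parity :: "uh \<Rightarrow> uh" where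
  "parity f = (\<lambda>c. (-1) ^ mdeg c * f c)"

lemma parity_umul: "parity (umul f g) = umul (parity f) (parity g)"
  unfolding parity_def umul_def
  by (auto simp: sum_distrib_left case_prod_beta mdeg_add power_add algebra_simps intro!: ext sum.cong)

lemma parity_uadd: "parity (uadd f g) = uadd (parity f) (parity g)"
  and parity_usmul: "parity (usmul z f) = usmul z (parity f)"
  and parity_usum: "parity (usum F S) = usum (\<lambda>s. parity (F s)) S"
  by (simp_all add: parity_def uadd_def usmul_def usum_def algebra_simps sum_distrib_left)

lemma parity_parity [simp]: "parity (parity f) = f"
  by (simp add: parity_def flip: power_mult_distrib)

lemma parity_uone [simp]: "parity uone = uone"
  by (auto simp: parity_def uone_def mdeg_def)

lemma parity_mon: "parity (mon a) = usmul ((-1) ^ mdeg a) (mon a)"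
  by (auto simp: parity_def mon_def usmul_def)

lemma parity_xi: "parity (xi i) = usmul (-1) (xi i)"
  and parity_xx: "parity (xx i) = xx i"
  by (simp_all add: xi_eq_mon xx_eq_mon parity_mon mdeg_def)

lemma parity_upart: "parity (upart e f) = usmul ((-1) ^ e) (upart e f)"
  by (auto simp: parity_def upart_def usmul_def fun_eq_iff minus_one_power_iff)

lemma upart_eq_parity: "upart e f = usmul (1 / 2) (uadd f (usmul ((-1) ^ e) (parity f)))"
  by (auto simp: parity_def upart_def uadd_def usmul_def fun_eq_iff minus_one_power_iff odd_iff_mod_2_eq_one)

lemma upart_0_1_sum: "f = uadd (upart 0 f) (upart 1 f)"
  by (auto simp: uadd_def upart_def fun_eq_iff)

lemma counit_upart_1: "counit (upart 1 f) = 0"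
  by (simp add: counit_def upart_def mdeg_def)

section \<open>A recursion for the generators \<open>u\<^sub>k\<close>\<close>

definition factor :: "complex \<Rightarrow> nat \<Rightarrow> uh" where
  "factor s i = uadd (xx i) (usmul s (xi i))"

lemma parity_factor: "parity (factor s i) = factor (- s) i"
  by (simp add: factor_def parity_uadd parity_usmul parity_xx parity_xi)

lemma counit_factor: "counit (factor s i) = 0"
  by (simp add: factor_def counit_def uadd_def usmul_def xx_eq_mon xi_eq_mon mon_def)

text \<open>\<open>alt_prod [i\<^sub>1, \<dots>, i\<^sub>k]\<close> is the ordered product over \<open>j = 1, \<dots>, k\<close> of \<open>x\<^bsub>i_j\<^esub> + (-1)\<^bsup>k - j\<^esup> \<xi>\<^bsub>i_j\<^esub>\<close>.\<close>

fun alt_prod :: "nat list \<Rightarrow> uh" where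
  "alt_prod [] = uone"
| "alt_prod (i # js) = umul (factor ((-1) ^ length js) i) (alt_prod js)"

lemma uprodl_enumerate_eq_alt_prod:
  "n + length js = Suc k \<Longrightarrow>
   uprodl (map (\<lambda>(j, i). uadd (xx i) (usmul ((-1) ^ (k - j)) (xi i))) (enumerate n js)) = alt_prod js"
proof (induction js arbitrary: n)
  case Nil
  then show ?case by (simp add: uprodl_def)
next
  case (Cons i js)
  then have "k - n = length js" by simp
  with Cons show ?case by (simp add: uprodl_def factor_def)
qed

lemma alt_prod_snoc: "alt_prod (js @ [i]) = umul (parity (alt_prod js)) (factor 1 i)"
  by (induction js) (simp_all add: umul_assoc parity_umul parity_factor)

lemma counit_alt_prod: "js \<noteq> [] \<Longrightarrow> counit (alt_prod js) = 0"
  by (cases js) (simp_all add: counit_umul counit_factor)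

definition ksubsets :: "nat \<Rightarrow> nat \<Rightarrow> nat set set" where
  "ksubsets m k = {I. I \<subseteq> {1..m} \<and> card I = k}"

lemma finite_ksubsets [simp]: "finite (ksubsets m k)"
  unfolding ksubsets_def by (rule finite_subset[of _ "Pow {1..m}"]) auto

lemma ksubsets_0: "ksubsets m 0 = {{}}"
  by (auto simp: ksubsets_def dest: finite_subset)

lemma ksubsets_eq_empty: "m < k \<Longrightarrow> ksubsets m k = {}"
  by (auto simp: ksubsets_def dest: card_mono[OF finite_atLeastAtMost])

lemma ksubsets_Suc_Suc:
  "ksubsets (Suc m) (Suc k) = ksubsets m (Suc k) \<union> insert (Suc m) ` ksubsets m k"
proof (intro equalityI subsetI)
  fix I assume I: "I \<in> ksubsets (Suc m) (Suc k)"
  then have "finite I"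
    by (auto simp: ksubsets_def intro: finite_subset)
  show "I \<in> ksubsets m (Suc k) \<union> insert (Suc m) ` ksubsets m k"
  proof (cases "Suc m \<in> I")
    case True
    then have "I = insert (Suc m) (I - {Suc m})" and "I - {Suc m} \<in> ksubsets m k"
      using I \<open>finite I\<close> by (auto simp: ksubsets_def)
    then show ?thesis by blast
  next
    case False
    then show ?thesis
      using I by (auto simp: ksubsets_def le_Suc_eq)
  qed
next
  fix I assume "I \<in> ksubsets m (Suc k) \<union> insert (Suc m) ` ksubsets m k"
  then show "I \<in> ksubsets (Suc m) (Suc k)"
  proof
    assume "I \<in> insert (Suc m) ` ksubsets m k"
    then obtain J where "J \<subseteq> {1..m}" "card J = k" "I = insert (Suc m) J"
      by (auto simp: ksubsets_def)
    moreover from this have "finite J" "Suc m \<notin> J"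
      by (auto intro: finite_subset)
    ultimately show ?thesis
      by (auto simp: ksubsets_def)
  qed (auto simp: ksubsets_def)
qed

lemma ksubsets_disjoint: "ksubsets m k \<inter> insert (Suc m) ` ksubsets m j = {}"
  by (auto simp: ksubsets_def)

lemma inj_on_insert_ksubsets: "inj_on (insert (Suc m)) (ksubsets m k)"
proof (rule inj_onI)
  fix A B assume "A \<in> ksubsets m k" "B \<in> ksubsets m k" and eq: "insert (Suc m) A = insert (Suc m) B"
  then have "Suc m \<notin> A" "Suc m \<notin> B"
    by (auto simp: ksubsets_def)
  then show "A = B"
    using eq by (metis Diff_insert_absorb)
qed

lemma sorted_list_of_set_insert_greatest:
  assumes "finite A" "\<forall>a\<in>A. a < x"
  shows "sorted_list_of_set (insert x A) = sorted_list_of_set A @ [x]"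
proof -
  have "sorted_list_of_set (insert x A) = insort x (sorted_list_of_set A)"
    using assms by auto
  also have "\<dots> = sorted_list_of_set A @ [x]"
    using assms by (intro sorted_insort_is_snoc) auto
  finally show ?thesis .
qed

lemma ugen_eq_usum_alt_prod: "ugen m k = usum (\<lambda>I. alt_prod (sorted_list_of_set I)) (ksubsets m k)"
  unfolding ugen_def ksubsets_def
  by (rule usum_cong) (auto intro: uprodl_enumerate_eq_alt_prod dest: finite_subset)

lemma ugen_0: "ugen m 0 = uone"
  by (simp add: ugen_eq_usum_alt_prod usum_def ksubsets_0)

lemma ugen_eq_0: "m < k \<Longrightarrow> ugen m k = (\<lambda>_. 0)"
  by (simp add: ugen_eq_usum_alt_prod usum_def ksubsets_eq_empty)

lemma counit_ugen: "0 < k \<Longrightarrow> counit (ugen m k) = 0"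
  by (auto simp: ugen_eq_usum_alt_prod usum_def counit_def ksubsets_def
      intro!: sum.neutral counit_alt_prod[unfolded counit_def] dest: finite_subset)

lemma ugen_Suc_Suc:
  "ugen (Suc m) (Suc k) = uadd (ugen m (Suc k)) (umul (parity (ugen m k)) (factor 1 (Suc m)))"
proof -
  let ?G = "\<lambda>I. alt_prod (sorted_list_of_set I)"
  have "ugen (Suc m) (Suc k) = uadd (ugen m (Suc k)) (usum ?G (insert (Suc m) ` ksubsets m k))"
    unfolding ugen_eq_usum_alt_prod ksubsets_Suc_Suc
    by (rule usum_union_disjoint) (auto simp: ksubsets_disjoint)
  also have "usum ?G (insert (Suc m) ` ksubsets m k)
      = usum (\<lambda>I. umul (parity (?G I)) (factor 1 (Suc m))) (ksubsets m k)"
    unfolding usum_reindex[OF inj_on_insert_ksubsets]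
  proof (rule usum_cong)
    fix I assume "I \<in> ksubsets m k"
    then have "finite I" "\<forall>a\<in>I. a < Suc m"
      by (auto simp: ksubsets_def intro: finite_subset)
    then have "sorted_list_of_set (insert (Suc m) I) = sorted_list_of_set I @ [Suc m]"
      by (rule sorted_list_of_set_insert_greatest)
    then show "(?G \<circ> insert (Suc m)) I = umul (parity (?G I)) (factor 1 (Suc m))"
      by (simp only: o_apply alt_prod_snoc)
  qed
  also have "\<dots> = umul (parity (ugen m k)) (factor 1 (Suc m))"
    by (simp add: ugen_eq_usum_alt_prod umul_usum_left parity_usum)
  finally show ?thesis .
qed

lemma factor_block_sum: "uadd (factor 1 (blk_a r i)) (factor 1 (blk_b r i)) = uadd (z0 r i) (phi0 r i)"
  by (simp add: factor_def z0_def phi0_def uadd_def fun_eq_iff)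

lemma factor_block_prod:
  assumes "1 \<le> i"
  shows "umul (factor (-1) (blk_a r i)) (factor 1 (blk_b r i)) = uadd (z1' r i) (usmul (-1) (phi1 r i))"
proof -
  have "blk_a r i < blk_b r i"
    using assms by (simp add: blk_a_def blk_b_def)
  then show ?thesis
    by (simp add: factor_def z1'_def phi1_def xx_eq_mon xi_eq_mon umul_uadd_left umul_uadd_right
        umul_usmul_left umul_usmul_right umul_mon msign_single)
      (auto simp: uadd_def usmul_def mon_def fun_eq_iff add.commute)
qed

lemma parity_phi0: "parity (phi0 r i) = usmul (-1) (phi0 r i)"
  unfolding phi0_def parity_uadd parity_xi by (simp add: uadd_def usmul_def fun_eq_iff)

lemma parity_phi1: "parity (phi1 r i) = usmul (-1) (phi1 r i)"
  unfolding phi1_def parity_uadd parity_xx parity_xi parity_umul parity_usmul umul_usmul_right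
  by (simp add: uadd_def usmul_def fun_eq_iff)

lemma parity_z0: "parity (z0 r i) = z0 r i"
  by (simp add: z0_def parity_uadd parity_xx)

lemma parity_z1': "parity (z1' r i) = z1' r i"
  by (simp add: z1'_def parity_uadd parity_xx parity_xi parity_umul parity_usmul umul_usmul_left umul_usmul_right)

lemma ugen_block_1: "ugen (r + 2 * Suc i) 1 = uadd (ugen (r + 2 * i) 1) (uadd (z0 r (Suc i)) (phi0 r (Suc i)))"
proof -
  have "blk_a r (Suc i) = Suc (r + 2 * i)" "blk_b r (Suc i) = Suc (Suc (r + 2 * i))"
    by (simp_all add: blk_a_def blk_b_def)
  then show ?thesis
    using factor_block_sum[of r "Suc i"] by (simp add: ugen_Suc_Suc ugen_0 uadd_assoc)
qed

lemma ugen_block_Suc_Suc: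
  "ugen (r + 2 * Suc i) (Suc (Suc k)) =
     uadd (ugen (r + 2 * i) (Suc (Suc k)))
       (uadd (umul (parity (ugen (r + 2 * i) (Suc k))) (uadd (z0 r (Suc i)) (phi0 r (Suc i))))
             (umul (ugen (r + 2 * i) k) (uadd (z1' r (Suc i)) (usmul (-1) (phi1 r (Suc i))))))"
proof -
  define m where "m = r + 2 * i"
  have "blk_a r (Suc i) = Suc m" "blk_b r (Suc i) = Suc (Suc m)"
    by (simp_all add: blk_a_def blk_b_def m_def)
  then have block: "uadd (factor 1 (Suc m)) (factor 1 (Suc (Suc m))) = uadd (z0 r (Suc i)) (phi0 r (Suc i))"
      "umul (factor (-1) (Suc m)) (factor 1 (Suc (Suc m))) = uadd (z1' r (Suc i)) (usmul (-1) (phi1 r (Suc i)))"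
    using factor_block_sum[of r "Suc i"] factor_block_prod[of "Suc i" r] by simp_all
  have "r + 2 * Suc i = Suc (Suc m)"
    by (simp add: m_def)
  then show ?thesis
    unfolding m_def[symmetric] block[symmetric]
    by (simp add: ugen_Suc_Suc parity_uadd parity_umul parity_factor umul_uadd_left umul_uadd_right
        umul_assoc uadd_assoc)
qed

section \<open>Evaluating the character\<close>

lemma esym_eq_sum_ksubsets: "esym a q t = (\<Sum>S\<in>ksubsets q a. \<Prod>i\<in>S. t i)"
  by (simp add: esym_def ksubsets_def)

lemma esym_0 [simp]: "esym 0 q t = 1"
  by (simp add: esym_eq_sum_ksubsets ksubsets_0)

lemma esym_eq_0: "q < a \<Longrightarrow> esym a q t = 0"
  by (simp add: esym_eq_sum_ksubsets ksubsets_eq_empty)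

lemma esym_Suc_Suc: "esym (Suc j) (Suc q) t = esym (Suc j) q t + t (Suc q) * esym j q t"
proof -
  have "esym (Suc j) (Suc q) t = esym (Suc j) q t + (\<Sum>S\<in>insert (Suc q) ` ksubsets q j. \<Prod>i\<in>S. t i)"
    unfolding esym_eq_sum_ksubsets ksubsets_Suc_Suc
    by (rule sum.union_disjoint) (auto simp: ksubsets_disjoint)
  also have "(\<Sum>S\<in>insert (Suc q) ` ksubsets q j. \<Prod>i\<in>S. t i) = (\<Sum>S\<in>ksubsets q j. t (Suc q) * (\<Prod>i\<in>S. t i))"
    unfolding sum.reindex[OF inj_on_insert_ksubsets]
    by (rule sum.cong) (auto simp: ksubsets_def intro!: prod.insert dest: finite_subset)
  finally show ?thesis
    by (simp add: esym_eq_sum_ksubsets sum_distrib_left)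
qed

definition esym_even :: "(nat \<Rightarrow> complex) \<Rightarrow> nat \<Rightarrow> nat \<Rightarrow> complex" where
  "esym_even t q k = (if even k then esym (k div 2) q t else 0)"

lemma esym_even_Suc_Suc:
  "esym_even t (Suc q) (Suc (Suc k)) = esym_even t q (Suc (Suc k)) + esym_even t q k * t (Suc q)"
  by (simp add: esym_even_def esym_Suc_Suc mult.commute)

lemma subalg_mono:
  assumes "G \<subseteq> H" and "a \<in> subalg G"
  shows "a \<in> subalg H"
  using assms(2) by (induction rule: subalg.induct) (use assms(1) in \<open>auto intro: subalg.intros\<close>)
lemma Wtens_closed:
  "uone \<in> Wtens r p"
  "a \<in> Wtens r p \<Longrightarrow> b \<in> Wtens r p \<Longrightarrow> uadd a b \<in> Wtens r p"
  "a \<in> Wtens r p \<Longrightarrow> b \<in> Wtens r p \<Longrightarrow> umul a b \<in> Wtens r p"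
  "a \<in> Wtens r p \<Longrightarrow> usmul z a \<in> Wtens r p"
  by (simp_all add: Wtens_def subalg.intros)

lemma W_subset_Wtens: "W r \<subseteq> Wtens r p"
  unfolding Wtens_def by (auto intro: subalg_mono[of "Wgens r"])

lemma block_gens_in_Wtens:
  "i \<in> {1..p} \<Longrightarrow> phi0 r i \<in> Wtens r p \<and> phi1 r i \<in> Wtens r p \<and> z0 r i \<in> Wtens r p \<and> z1' r i \<in> Wtens r p"
  unfolding Wtens_def by (auto intro!: subalg.gen)

locale S_character =
  fixes r p :: nat and t :: "nat \<Rightarrow> complex" and \<chi> :: "uh \<Rightarrow> complex"
  assumes S_char: "is_S_char r p t \<chi>"
begin

lemma chi_uone: "\<chi> uone = 1"
  and chi_uadd: "a \<in> Wtens r p \<Longrightarrow> b \<in> Wtens r p \<Longrightarrow> \<chi> (uadd a b) = \<chi> a + \<chi> b"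
  and chi_umul: "a \<in> Wtens r p \<Longrightarrow> b \<in> Wtens r p \<Longrightarrow> \<chi> (umul a b) = \<chi> a * \<chi> b"
  and chi_usmul: "a \<in> Wtens r p \<Longrightarrow> \<chi> (usmul z a) = z * \<chi> a"
  and chi_W: "a \<in> W r \<Longrightarrow> \<chi> a = counit a"
  and chi_block: "i \<in> {1..p} \<Longrightarrow> \<chi> (phi0 r i) = 0 \<and> \<chi> (phi1 r i) = 0 \<and> \<chi> (z0 r i) = 0 \<and> \<chi> (z1' r i) = t i"
  using S_char by (simp_all add: is_S_char_def)

text \<open>It suffices to check the generators: \<open>u\<^sub>k(1)\<close>, \<open>\<phi>\<^sub>0\<close> and \<open>\<phi>\<^sub>1\<close> are odd and killed by \<open>\<chi>\<close>, the others are even.\<close>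

lemma parity_Wtens:
  assumes "a \<in> Wtens r p"
  shows "parity a \<in> Wtens r p \<and> \<chi> (parity a) = \<chi> a"
  using assms
proof (induction rule: subalg.induct[of _ "Wgens r \<union> (\<Union>i\<in>{1..p}. {phi0 r i, phi1 r i, z0 r i, z1' r i})",
      folded Wtens_def, consumes 1, case_names one gen add smul mul])
  case one
  then show ?case by (simp add: Wtens_closed)
next
  case (gen g)
  then have g: "g \<in> Wtens r p"
    by (simp add: Wtens_def subalg.gen)
  from gen consider (W) "g \<in> Wgens r"
    | (block) i where "i \<in> {1..p}" "g \<in> {phi0 r i, phi1 r i, z0 r i, z1' r i}"
    by auto
  then have "parity g = g \<or> parity g = usmul (-1) g \<and> \<chi> g = 0"
  proof cases
    case W
    then obtain k e where "g = u r k e" "e \<in> {0, 1}"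
      by (auto simp: Wgens_def)
    then show ?thesis
      using chi_W[OF subalg.gen[OF W]] counit_upart_1 by (auto simp: u_def parity_upart)
  next
    case block
    then show ?thesis
      using chi_block[OF block(1)] by (auto simp: parity_phi0 parity_phi1 parity_z0 parity_z1')
  qed
  then show ?case
    using g by (auto simp: chi_usmul Wtens_closed)
next
  case (add a b)
  then show ?case by (simp add: parity_uadd chi_uadd Wtens_closed)
next
  case (smul a z)
  then show ?case by (simp add: parity_usmul chi_usmul Wtens_closed)
next
  case (mul a b)
  then show ?case by (simp add: parity_umul chi_umul Wtens_closed)
qed

lemma chi_ugen:
  assumes "q \<le> p"
  shows "ugen (r + 2 * q) k \<in> Wtens r p \<and> \<chi> (ugen (r + 2 * q) k) = esym_even t q k"
  using assms
proof (induction q arbitrary: k)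
  case 0
  consider "k = 0" | "0 < k" "k \<le> r" | "r < k"
    by linarith
  then show ?case
  proof cases
    case 1
    then show ?thesis by (simp add: ugen_0 Wtens_closed chi_uone esym_even_def)
  next
    case 2
    then have "u r k 0 \<in> W r" "u r k 1 \<in> W r"
      by (fastforce simp: Wgens_def intro: subalg.gen)+
    then have "ugen r k \<in> W r"
      by (metis u_def upart_0_1_sum subalg.add)
    then show ?thesis
      using 2 W_subset_Wtens by (auto simp: chi_W counit_ugen esym_even_def esym_eq_0)
  next
    case 3
    then have "ugen r k = usmul 0 uone"
      by (simp add: ugen_eq_0 usmul_def)
    then show ?thesis
      using 3 by (auto simp: Wtens_closed chi_usmul esym_even_def esym_eq_0)
  qed
next
  case (Suc q)
  then have IH: "\<And>k. ugen (r + 2 * q) k \<in> Wtens r p \<and> \<chi> (ugen (r + 2 * q) k) = esym_even t q k"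
    by simp
  have i: "Suc q \<in> {1..p}"
    using Suc.prems by simp
  let ?Z0 = "uadd (z0 r (Suc q)) (phi0 r (Suc q))"
  let ?Z1 = "uadd (z1' r (Suc q)) (usmul (-1) (phi1 r (Suc q)))"
  have Z: "?Z0 \<in> Wtens r p" "\<chi> ?Z0 = 0" "?Z1 \<in> Wtens r p" "\<chi> ?Z1 = t (Suc q)"
    using block_gens_in_Wtens[OF i] chi_block[OF i] by (simp_all add: Wtens_closed chi_uadd chi_usmul)
  consider "k = 0" | "k = 1" | k' where "k = Suc (Suc k')"
    by (metis One_nat_def not0_implies_Suc)
  then show ?case
  proof cases
    case 1
    then show ?thesis by (simp add: ugen_0 Wtens_closed chi_uone esym_even_def)
  next
    case 2
    show ?thesis
      unfolding 2 ugen_block_1 using IH[of 1] Z by (simp add: Wtens_closed chi_uadd esym_even_def)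
  next
    case 3
    show ?thesis
      unfolding 3 ugen_block_Suc_Suc esym_even_Suc_Suc
      using IH[of k] IH[of k'] IH[of "Suc k'"] parity_Wtens[of "ugen (r + 2 * q) (Suc k')"] Z
      by (simp add: 3 Wtens_closed chi_uadd chi_umul)
  qed
qed

lemma chi_u:
  shows "\<chi> (u (r + 2 * p) k 0) = esym_even t p k"
    and "\<chi> (u (r + 2 * p) k 1) = 0"
proof -
  have "ugen (r + 2 * p) k \<in> Wtens r p" "\<chi> (ugen (r + 2 * p) k) = esym_even t p k"
    using chi_ugen[of p k] by simp_all
  moreover note parity_Wtens[OF this(1)]
  ultimately show "\<chi> (u (r + 2 * p) k 0) = esym_even t p k" "\<chi> (u (r + 2 * p) k 1) = 0"
    by (simp_all add: u_def upart_eq_parity Wtens_closed chi_uadd chi_usmul)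
qed

end

theorem lemma4p6:
  fixes r p n :: nat and t :: "nat \<Rightarrow> complex" and \<chi> :: "uh \<Rightarrow> complex"
  assumes "r + 2 * p = n"
    and "\<forall>i\<in>{1..p}. t i \<noteq> 0"
    and "is_S_char r p t \<chi>"
  shows "\<forall>k\<in>{1..n}. \<chi> (u n k 1) = 0 \<and>
           \<chi> (u n k 0) = (if odd k \<or> k > 2 * p then 0 else esym (k div 2) p t)"
proof
  fix k
  interpret S_character r p t \<chi>
    using assms(3) by (rule S_character.intro)
  have "esym_even t p k = (if odd k \<or> k > 2 * p then 0 else esym (k div 2) p t)"
    by (auto simp: esym_even_def esym_eq_0)
  then show "\<chi> (u n k 1) = 0 \<and> \<chi> (u n k 0) = (if odd k \<or> k > 2 * p then 0 else esym (k div 2) p t)"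
    using chi_u assms(1) by simp
qed

end
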